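(* Let $L\ge 2$, $M=L^2$, and consider square $M$-QAM whose constellation points form an $L\times L$ equally spaced grid, indexed by $(k,k')\in\{0,\dots,L-1\}^2$ (in-phase index $k$, quadrature index $k'$), carrying distinct original symbols $s_{o,k,k'}$. For $s_1=s_{o,k_1,k_1'}$ and $s_2=s_{o,k_2,k_2'}$, the superposed signal (synchronous phase, equal power, no noise) is the point of the superposed constellation with index $(l,l')=(k_1+k_2,\,k_1'+k_2')\in\{0,\dots,2L-2\}^2$. Let $c:\{0,\dots,2L-2\}^2\to\mathcal{S}$ be any map and define $C(s_{o,k_1,k_1'},s_{o,k_2,k_2'})=c(k_1+k_2,k_1'+k_2')$. Then $C$ satisfies the Exclusive Law (for all $s_1'\ne s_1$ and all $s_2$, $C(s_1',s_2)\ne C(s_1,s_2)$; and for all $s_2'\ne s_2$ and all $s_1$, $C(s_1,s_2')\ne C(s_1,s_2)$) if and only if the superposed constellation points in any $L$ by $L$ square are mapped to distinct symbols, i.e. for every $(a,b)\in\{0,\dots,L-1\}^2$ the restriction of $c$ to $\{a,\dots,a+L-1\}\times\{b,\dots,b+L-1\}$ is injective.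
   Context: The Exclusive Law is taken as the necessary and sufficient condition for unique decodability at destinations that know one of the two source symbols and receive the coded symbol $C(s_1,s_2)$ from the relay. *)

theory Defs
  imports Main
begin

definition qam_grid :: "nat \<Rightarrow> (nat \<times> nat) set" where
  "qam_grid L = {0..<L} \<times> {0..<L}"

definition exclusive_law :: "'s set \<Rightarrow> ('s \<Rightarrow> 's \<Rightarrow> 'c) \<Rightarrow> bool" where
  "exclusive_law S C \<longleftrightarrow>
     (\<forall>s1\<in>S. \<forall>s1'\<in>S. \<forall>s2\<in>S. s1' \<noteq> s1 \<longrightarrow> C s1' s2 \<noteq> C s1 s2) \<and>
     (\<forall>s1\<in>S. \<forall>s2\<in>S. \<forall>s2'\<in>S. s2' \<noteq> s2 \<longrightarrow> C s1 s2' \<noteq> C s1 s2)"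

end

theory Submission
  imports Defs
begin

(*
  A network coding map C on the symbols so ` G satisfies the Exclusive Law iff
  every "row" and every "column" of C is injective.  When the symbols are
  indexed by the QAM grid and C only depends on the superposed index, i.e.
  C (so x) (so y) = c (x + y) with componentwise addition, both conditions say
  that c is injective on every translate  (a,b) + {0..L-1}^2  of the grid with
  (a,b) in the grid -- and these translates are exactly the L by L squares
  {a..a+L-1} x {b..b+L-1} of the superposed constellation.
*)

definition grid_shift :: "nat \<times> nat \<Rightarrow> nat \<times> nat \<Rightarrow> nat \<times> nat" where
  "grid_shift z x = (fst x + fst z, snd x + snd z)"

text \<open>Superposition is symmetric in the two users, which makes the row and column
  conditions of the Exclusive Law coincide.\<close>
lemma grid_shift_commute: "grid_shift z x = grid_shift x z"
  by (simp add: grid_shift_def)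

text \<open>Translation is injective, so injectivity of c on a translate of the grid is
  injectivity of c after translation on the grid itself.\<close>
lemma inj_grid_shift: "inj (grid_shift z)"
  by (auto intro!: injI simp: grid_shift_def prod_eq_iff)

lemma exclusive_law_iff_inj_rows_cols:
  assumes so_inj: "inj_on so G"
    and C_f: "\<And>x y. x \<in> G \<Longrightarrow> y \<in> G \<Longrightarrow> C (so x) (so y) = f x y"
  shows "exclusive_law (so ` G) C \<longleftrightarrow>
    (\<forall>y\<in>G. inj_on (\<lambda>x. f x y) G) \<and> (\<forall>x\<in>G. inj_on (f x) G)"
proof -
  have so_ne: "so x' \<noteq> so x \<longleftrightarrow> x' \<noteq> x" if "x \<in> G" "x' \<in> G" for x x'
    using so_inj that by (auto dest: inj_onD)
  show ?thesis
    unfolding exclusive_law_def inj_on_def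
    by (simp add: C_f so_ne) blast
qed

lemma exclusive_law_superposition_iff:
  assumes so_inj: "inj_on so G"
    and C_c: "\<And>x y. x \<in> G \<Longrightarrow> y \<in> G \<Longrightarrow> C (so x) (so y) = c (grid_shift y x)"
  shows "exclusive_law (so ` G) C \<longleftrightarrow> (\<forall>z\<in>G. inj_on c (grid_shift z ` G))"
proof -
  have translate: "inj_on c (grid_shift z ` G) \<longleftrightarrow> inj_on (\<lambda>x. c (grid_shift z x)) G" for z
    using comp_inj_on_iff[OF inj_on_subset[OF inj_grid_shift subset_UNIV], of c]
    by (simp add: comp_def)
  show ?thesis
    using exclusive_law_iff_inj_rows_cols[of so G C "\<lambda>x y. c (grid_shift y x)", OF so_inj C_c]
    by (simp add: translate grid_shift_commute)
qed

lemma square_eq_grid_shift: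
  assumes "L > 0"
  shows "{a..a + L - 1} \<times> {b..b + L - 1} = grid_shift (a, b) ` qam_grid L"
proof (rule set_eqI)
  fix p :: "nat \<times> nat"
  obtain u w where p: "p = (u, w)" by (cases p)
  have "p \<in> {a..a + L - 1} \<times> {b..b + L - 1} \<longleftrightarrow> a \<le> u \<and> u - a < L \<and> b \<le> w \<and> w - b < L"
    using assms by (auto simp: p)
  also have "\<dots> \<longleftrightarrow> p \<in> grid_shift (a, b) ` qam_grid L"
  proof
    assume "a \<le> u \<and> u - a < L \<and> b \<le> w \<and> w - b < L"
    then have "(u - a, w - b) \<in> qam_grid L" and "p = grid_shift (a, b) (u - a, w - b)"
      by (auto simp: p qam_grid_def grid_shift_def)
    then show "p \<in> grid_shift (a, b) ` qam_grid L" by blast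
  qed (auto simp: p qam_grid_def grid_shift_def)
  finally show "p \<in> {a..a + L - 1} \<times> {b..b + L - 1} \<longleftrightarrow> p \<in> grid_shift (a, b) ` qam_grid L" .
qed

theorem corollary1:
  fixes L :: nat
    and so :: "nat \<times> nat \<Rightarrow> 's"
    and c :: "nat \<times> nat \<Rightarrow> 'c"
    and C :: "'s \<Rightarrow> 's \<Rightarrow> 'c"
  assumes "L \<ge> 2"
    and "inj_on so (qam_grid L)"
    and "\<forall>k1 k1' k2 k2'. (k1, k1') \<in> qam_grid L \<longrightarrow> (k2, k2') \<in> qam_grid L \<longrightarrow>
           C (so (k1, k1')) (so (k2, k2')) = c (k1 + k2, k1' + k2')"
  shows "exclusive_law (so ` qam_grid L) C \<longleftrightarrow>
    (\<forall>a b. a < L \<longrightarrow> b < L \<longrightarrow> inj_on c ({a..a + L - 1} \<times> {b..b + L - 1}))"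
proof -
  have C_c: "C (so x) (so y) = c (grid_shift y x)"
    if "x \<in> qam_grid L" "y \<in> qam_grid L" for x y
    using assms(3) that by (cases x, cases y) (simp add: grid_shift_def)
  have "exclusive_law (so ` qam_grid L) C \<longleftrightarrow>
      (\<forall>z\<in>qam_grid L. inj_on c (grid_shift z ` qam_grid L))"
    using exclusive_law_superposition_iff[of so "qam_grid L" C c, OF assms(2) C_c] .
  also have "\<dots> \<longleftrightarrow> (\<forall>a b. a < L \<longrightarrow> b < L \<longrightarrow> inj_on c ({a..a + L - 1} \<times> {b..b + L - 1}))"
    using square_eq_grid_shift[of L] assms(1) by (auto simp: qam_grid_def)
  finally show ?thesis .
qed

end
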